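(* Let $\mathcal{P}$ be a profile of unrooted phylogenetic trees whose display graph $G(\mathcal{P})$ is connected. Let $T\in\mathcal{P}$ and suppose $F$ is a minimal cut of $G(\mathcal{P})$ that contains exactly one edge $e$ of $T$. Then the edges of the two subtrees of $T-e$ lie in different connected components of $G(\mathcal{P})-F$ (i.e., no edge of one subtree lies in the same component as an edge of the other subtree).
   Context: A phylogenetic tree is an unrooted tree whose leaves are bijectively labeled (leaves identified with labels; internal vertices have degree at least three). A profile $\mathcal{P}=\{T_1,\dots,T_k\}$ is a finite collection of phylogenetic trees; internal vertices of distinct trees are disjoint, while leaves with the same label are the same vertex. The display graph $G(\mathcal{P})$ has vertex set $\bigcup_i V(T_i)$ and edge set $\bigcup_i E(T_i)$. A cut of a connected graph $G$ is $F\subseteq E(G)$ with $G-F$ (same vertices, edges of $F$ removed) disconnected; it is minimal if no proper subset is a cut. *)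

theory Defs
  imports Main
begin

definition graph :: "'v set \<Rightarrow> 'v set set \<Rightarrow> bool" where
  "graph V E \<longleftrightarrow> finite V \<and> (\<forall>e\<in>E. card e = 2 \<and> e \<subseteq> V)"

definition adj :: "'v set set \<Rightarrow> 'v \<Rightarrow> 'v \<Rightarrow> bool" where
  "adj E u v \<longleftrightarrow> {u, v} \<in> E"

definition reach :: "'v set set \<Rightarrow> 'v \<Rightarrow> 'v \<Rightarrow> bool" where
  "reach E = (adj E)\<^sup>*\<^sup>*"

definition connected_graph :: "'v set \<Rightarrow> 'v set set \<Rightarrow> bool" where
  "connected_graph V E \<longleftrightarrow> V \<noteq> {} \<and> (\<forall>u\<in>V. \<forall>v\<in>V. reach E u v)"

definition has_cycle :: "'v set set \<Rightarrow> bool" where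
  "has_cycle E \<longleftrightarrow> (\<exists>vs. length vs \<ge> 3 \<and> distinct vs \<and>
      (\<forall>i<length vs. {vs ! i, vs ! ((i + 1) mod length vs)} \<in> E))"

definition is_tree :: "'v set \<Rightarrow> 'v set set \<Rightarrow> bool" where
  "is_tree V E \<longleftrightarrow> graph V E \<and> connected_graph V E \<and> \<not> has_cycle E"

definition degree :: "'v set set \<Rightarrow> 'v \<Rightarrow> nat" where
  "degree E v = card {e \<in> E. v \<in> e}"

definition leaves :: "'v set \<Rightarrow> 'v set set \<Rightarrow> 'v set" where
  "leaves V E = {v \<in> V. degree E v \<le> 1}"

text \<open>Phylogenetic tree: leaves are the labels themselves; internal vertices have degree >= 3.\<close>
definition phylo_tree :: "'v set \<Rightarrow> 'v set set \<Rightarrow> bool" where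
  "phylo_tree V E \<longleftrightarrow> is_tree V E \<and> (\<forall>v \<in> V - leaves V E. degree E v \<ge> 3)"

text \<open>Profile: finite collection of phylogenetic trees; distinct trees share only
vertices that are leaves (labels) of both, i.e. internal vertices are disjoint.\<close>
definition profile :: "('v set \<times> 'v set set) set \<Rightarrow> bool" where
  "profile P \<longleftrightarrow> finite P \<and> (\<forall>T\<in>P. phylo_tree (fst T) (snd T)) \<and>
     (\<forall>T\<in>P. \<forall>T'\<in>P. T \<noteq> T' \<longrightarrow>
        fst T \<inter> fst T' \<subseteq> leaves (fst T) (snd T) \<inter> leaves (fst T') (snd T'))"

definition display_V :: "('v set \<times> 'v set set) set \<Rightarrow> 'v set" where
  "display_V P = (\<Union>T\<in>P. fst T)"

definition display_E :: "('v set \<times> 'v set set) set \<Rightarrow> 'v set set" where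
  "display_E P = (\<Union>T\<in>P. snd T)"

definition is_cut :: "'v set \<Rightarrow> 'v set set \<Rightarrow> 'v set set \<Rightarrow> bool" where
  "is_cut V E F \<longleftrightarrow> F \<subseteq> E \<and> \<not> connected_graph V (E - F)"

definition minimal_cut :: "'v set \<Rightarrow> 'v set set \<Rightarrow> 'v set set \<Rightarrow> bool" where
  "minimal_cut V E F \<longleftrightarrow> is_cut V E F \<and> (\<forall>F'. F' \<subset> F \<longrightarrow> \<not> is_cut V E F')"

end

theory Submission
  imports Defs
begin

text \<open>Minimality of F means that putting the tree edge e = {a, b} back into G(P) - F
  reconnects the graph, so a and b lie in different components of G(P) - F.  On the other
  hand, every vertex of T is joined inside T - e to a or to b, and two vertices that are
  not joined in T - e are joined to different endpoints.  A walk between them in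
  G(P) - F, which contains T - e, would therefore join a to b.\<close>

lemma reach_refl: "reach E u u"
  unfolding reach_def by simp

lemma reach_trans: "reach E u v \<Longrightarrow> reach E v w \<Longrightarrow> reach E u w"
  unfolding reach_def by simp

lemma reach_step: "reach E u v \<Longrightarrow> {v, w} \<in> E \<Longrightarrow> reach E u w"
  unfolding reach_def adj_def by (simp add: rtranclp.rtrancl_into_rtrancl)

lemma reach_sym: "reach E u v \<Longrightarrow> reach E v u"
  unfolding reach_def
proof (induction rule: rtranclp_induct)
  case base
  then show ?case by simp
next
  case (step y z)
  have "adj E z y" using step(2) by (simp add: adj_def insert_commute)
  then show ?case using step(3) by (meson converse_rtranclp_into_rtranclp)
qed

lemma reach_mono: "E \<subseteq> E' \<Longrightarrow> reach E u v \<Longrightarrow> reach E' u v"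
  unfolding reach_def by (rule rtranclp_mono[THEN predicate2D]) (auto simp: adj_def)

lemma reach_insert_redundant_edge:
  assumes ab: "reach E a b" and "reach (insert {a, b} E) u v"
  shows "reach E u v"
  using assms(2) unfolding reach_def[of "insert {a, b} E"]
proof (induction rule: rtranclp_induct)
  case base
  then show ?case by (rule reach_refl)
next
  case (step y z)
  from step(2) consider "{y, z} \<in> E" | "y = a" "z = b" | "y = b" "z = a"
    unfolding adj_def by (auto simp: doubleton_eq_iff)
  then show ?case
  proof cases
    case 1
    then show ?thesis using reach_step[OF step(3)] by simp
  next
    case 2
    then show ?thesis using step(3) ab reach_trans[of E u a b] by simp
  next
    case 3
    then show ?thesis using step(3) reach_sym[OF ab] reach_trans[of E u b a] by simp
  qed
qed

lemma reach_insert_edge_cases: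
  assumes "reach (insert {a, b} E) u v"
  shows "reach E u v \<or> reach E a v \<or> reach E b v"
  using assms unfolding reach_def[of "insert {a, b} E"]
proof (induction rule: rtranclp_induct)
  case base
  then show ?case by (simp add: reach_refl)
next
  case (step y z)
  from step(2) consider "{y, z} \<in> E" | "z = a \<or> z = b"
    unfolding adj_def by (auto simp: doubleton_eq_iff)
  then show ?case
  proof cases
    case 1
    then show ?thesis
      using step(3) reach_step[of E u y z] reach_step[of E a y z] reach_step[of E b y z]
      by blast
  next
    case 2
    then show ?thesis using reach_refl[of E a] reach_refl[of E b] by auto
  qed
qed

lemma minimal_cut_edge_endpoints_not_reach:
  assumes min: "minimal_cut V E F" and ab: "{a, b} \<in> F"
  shows "\<not> reach (E - F) a b"
proof
  assume "reach (E - F) a b"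
  have FE: "F \<subseteq> E" and disconn: "\<not> connected_graph V (E - F)"
    using min unfolding minimal_cut_def is_cut_def by auto
  have "\<not> is_cut V E (F - {{a, b}})"
    using min ab unfolding minimal_cut_def by auto
  moreover have "E - (F - {{a, b}}) = insert {a, b} (E - F)"
    using FE ab by auto
  ultimately have conn: "connected_graph V (insert {a, b} (E - F))"
    using FE unfolding is_cut_def by auto
  have "reach (E - F) u v" if "u \<in> V" "v \<in> V" for u v
    using conn that reach_insert_redundant_edge[OF \<open>reach (E - F) a b\<close>, of u v]
    unfolding connected_graph_def by blast
  then have "connected_graph V (E - F)"
    using conn unfolding connected_graph_def by blast
  with disconn show False ..
qed

lemma connected_delete_edge_opposite_sides:
  assumes conn: "connected_graph V E" and ab: "{a, b} \<in> E" "a \<in> V"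
    and uw: "u \<in> V" "w \<in> V" and sep: "\<not> reach (E - {{a, b}}) u w"
  shows "reach (E - {{a, b}}) a u \<and> reach (E - {{a, b}}) b w
       \<or> reach (E - {{a, b}}) b u \<and> reach (E - {{a, b}}) a w"
proof -
  let ?R = "reach (E - {{a, b}})"
  have side: "?R a v \<or> ?R b v" if "v \<in> V" for v
  proof -
    have "reach (insert {a, b} (E - {{a, b}})) a v"
      using conn ab that unfolding connected_graph_def by (simp add: insert_absorb)
    then show ?thesis using reach_insert_edge_cases[of a b "E - {{a, b}}" a v] by blast
  qed
  have not_same: "\<not> (?R c u \<and> ?R c w)" for c
  proof
    assume "?R c u \<and> ?R c w"
    then have "?R u w" using reach_trans[OF reach_sym[of _ c u]] by blast
    with sep show False ..
  qed
  show ?thesis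
    using side[OF uw(1)] side[OF uw(2)] not_same[of a] not_same[of b] by blast
qed

theorem lemma7:
  fixes P :: "('v set \<times> 'v set set) set"
    and VT :: "'v set" and ET :: "'v set set" and F :: "'v set set" and e :: "'v set"
  assumes "profile P"
    and "connected_graph (display_V P) (display_E P)"
    and "(VT, ET) \<in> P"
    and "minimal_cut (display_V P) (display_E P) F"
    and "e \<in> ET" and "F \<inter> ET = {e}"
  shows "\<forall>x \<in> ET - {e}. \<forall>y \<in> ET - {e}.
           (\<forall>u\<in>x. \<forall>w\<in>y. \<not> reach (ET - {e}) u w) \<longrightarrow>
           (\<forall>u\<in>x. \<forall>w\<in>y. \<not> reach (display_E P - F) u w)"
proof (intro ballI impI)
  let ?G = "display_E P - F"
  have "is_tree VT ET" using assms(1,3) unfolding profile_def phylo_tree_def by force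
  then have gr: "graph VT ET" and conn: "connected_graph VT ET" by (auto simp: is_tree_def)
  obtain a b where e: "e = {a, b}"
    using gr assms(5) unfolding graph_def by (metis card_2_iff)
  have "a \<in> VT" using gr assms(5) e unfolding graph_def by auto
  have not_ab: "\<not> reach ?G a b"
    using minimal_cut_edge_endpoints_not_reach[OF assms(4)] assms(6) e by blast
  have sub: "ET - {e} \<subseteq> ?G"
    using assms(3,6) unfolding display_E_def by force
  fix x y u w
  assume "x \<in> ET - {e}" "y \<in> ET - {e}" "\<forall>u\<in>x. \<forall>w\<in>y. \<not> reach (ET - {e}) u w"
    and "u \<in> x" "w \<in> y"
  then have "u \<in> VT" "w \<in> VT" "\<not> reach (ET - {e}) u w"
    using gr unfolding graph_def by auto
  then have "reach (ET - {e}) a u \<and> reach (ET - {e}) b w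
      \<or> reach (ET - {e}) b u \<and> reach (ET - {e}) a w"
    using connected_delete_edge_opposite_sides[OF conn assms(5)[unfolded e] \<open>a \<in> VT\<close>] e
    by simp
  then have sides: "reach ?G a u \<and> reach ?G b w \<or> reach ?G b u \<and> reach ?G a w"
    using reach_mono[OF sub] by blast
  show "\<not> reach ?G u w"
  proof
    assume "reach ?G u w"
    from sides have "reach ?G a b \<or> reach ?G b a"
    proof (elim disjE conjE)
      assume "reach ?G a u" "reach ?G b w"
      then show ?thesis
        using reach_trans[OF reach_trans[OF _ \<open>reach ?G u w\<close>] reach_sym] by blast
    next
      assume "reach ?G b u" "reach ?G a w"
      then show ?thesis
        using reach_trans[OF reach_trans[OF _ \<open>reach ?G u w\<close>] reach_sym] by blast
    qed
    with not_ab reach_sym[of ?G b a] show False by blast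
  qed
qed

end
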